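(* Let $n$ be a positive integer divisible by $4$. Let $\mathcal{T}^*_n$ be the family of triangles on an $n$-element vertex set obtained as follows: choose $\frac{n}{4}$ pairwise disjoint pairs $\{u_i,w_i\}$ of vertices, let $R$ be the set of the remaining $\frac{n}{2}$ vertices, and let $\mathcal{T}^*_n=\{\{u_i,w_i,r\} : 1\le i\le \frac n4,\ r\in R\}$. Then $\mathcal{T}^*_n$ is a set of $\frac{n^2}{8}$ triangles with no rainbow triangle, and it is the unique such set up to isomorphism: every set of exactly $\frac{n^2}{8}$ distinct triangles on an $n$-element vertex set having no rainbow triangle is isomorphic to $\mathcal{T}^*_n$ (i.e., is the image of $\mathcal{T}^*_n$ under a bijection of the vertex sets).
   Context: A triangle on a vertex set $V$ is a $3$-element subset $\{x,y,z\}\subseteq V$, identified with its edge set $\{\{x,y\},\{y,z\},\{x,z\}\}$. For a family $\mathcal{T}$ of triangles, a rainbow triangle is a triangle $\{x,y,z\}$ on $V$ together with three distinct members $t_1,t_2,t_3$ of $\mathcal{T}$ such that $\{x,y\}$ is an edge of $t_1$, $\{y,z\}$ is an edge of $t_2$ and $\{x,z\}$ is an edge of $t_3$. *)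

theory Defs
  imports Main
begin

definition triangles_on :: "'a set \<Rightarrow> 'a set set" where
  "triangles_on V = {t. t \<subseteq> V \<and> card t = 3}"

text \<open>A rainbow triangle for a family T of triangles on V: a triangle {x,y,z} on V
  and three distinct members t1,t2,t3 of T with {x,y} an edge of t1, {y,z} an edge
  of t2, {x,z} an edge of t3 (x,y,z are distinct since card {x,y,z} = 3, so an edge
  {x,y} of t is just {x,y} being a subset of t).\<close>
definition has_rainbow_triangle :: "'a set \<Rightarrow> 'a set set \<Rightarrow> bool" where
  "has_rainbow_triangle V T \<longleftrightarrow>
     (\<exists>x y z t1 t2 t3. {x, y, z} \<in> triangles_on V \<and>
        t1 \<in> T \<and> t2 \<in> T \<and> t3 \<in> T \<and> t1 \<noteq> t2 \<and> t2 \<noteq> t3 \<and> t1 \<noteq> t3 \<and>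
        {x, y} \<subseteq> t1 \<and> {y, z} \<subseteq> t2 \<and> {x, z} \<subseteq> t3)"

definition admissible_pairs :: "nat \<Rightarrow> 'a set \<Rightarrow> 'a set set \<Rightarrow> bool" where
  "admissible_pairs n V P \<longleftrightarrow>
     (\<forall>p\<in>P. p \<subseteq> V \<and> card p = 2) \<and> finite P \<and> card P = n div 4 \<and> pairwise disjnt P"

definition Tstar_choice :: "'a set \<Rightarrow> 'a set set \<Rightarrow> 'a set set" where
  "Tstar_choice V P = {insert r p | p r. p \<in> P \<and> r \<in> V - \<Union>P}"

definition Tstar :: "nat \<Rightarrow> nat set set" where
  "Tstar n = {{2*i, 2*i+1, r} | i r. i < n div 4 \<and> n div 2 \<le> r \<and> r < n}"

end

theory Submission
  imports Defs
begin

text \<open>In a family \<open>T\<close> without rainbow triangles every member \<open>t\<close> has an apex: a vertex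
  whose two edges in \<open>t\<close> lie in no other member (if two edges of \<open>t\<close> at a common vertex
  both lay in other members, these two members and \<open>t\<close> would form a rainbow triangle). The
  \<open>2 |T|\<close> edges at the apexes, the legs, are distinct and form a triangle-free graph, so Mantel's
  theorem gives \<open>8 |T| \<le> n\<^sup>2\<close>; in the extremal case the legs form the complete
  bipartite graph between two halves \<open>X\<close> and \<open>V - X\<close>. Moving apexes along legs then shows
  that all apexes lie in the same half, say \<open>X\<close>, that the bases \<open>t - {apex t}\<close> partition
  \<open>V - X\<close> into pairs, and that every vertex of \<open>X\<close> forms a member with every base: this is
  the construction \<open>T*\<^sub>n\<close>.\<close>

section \<open>Mantel's theorem and its extremal graphs\<close>

definition cross_edges :: "'a set \<Rightarrow> 'a set \<Rightarrow> 'a set set" where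
  "cross_edges A B = {{a, b} | a b. a \<in> A \<and> b \<in> B}"

lemma doubleton_in_cross_edges_iff:
  "{u, v} \<in> cross_edges A B \<longleftrightarrow> (u \<in> A \<and> v \<in> B) \<or> (u \<in> B \<and> v \<in> A)"
  unfolding cross_edges_def by (auto simp: doubleton_eq_iff)

lemma cross_edges_commute: "cross_edges A B = cross_edges B A"
  unfolding cross_edges_def by (auto simp: insert_commute)

lemma cross_edges_eq_image: "cross_edges A B = (\<lambda>(a, b). {a, b}) ` (A \<times> B)"
  unfolding cross_edges_def by auto

lemma finite_cross_edges: "finite A \<Longrightarrow> finite B \<Longrightarrow> finite (cross_edges A B)"
  by (simp add: cross_edges_eq_image)

lemma card_cross_edges:
  assumes "A \<inter> B = {}"
  shows "card (cross_edges A B) = card A * card B"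
proof -
  have "inj_on (\<lambda>(a, b). {a, b}) (A \<times> B)"
    using assms by (auto simp: inj_on_def doubleton_eq_iff)
  then show ?thesis
    by (simp add: cross_edges_eq_image card_image card_cartesian_product)
qed

lemma four_mult_le_square_add: "4 * (a * b) \<le> ((a::nat) + b)\<^sup>2"
proof -
  have "int (4 * (a * b)) \<le> int ((a + b)\<^sup>2)"
    using zero_le_power2[of "int a - int b"] by (simp add: power2_eq_square algebra_simps)
  then show ?thesis
    by (simp only: of_nat_le_iff)
qed

lemma four_mult_eq_square_addD:
  assumes "4 * (a * b) = ((a::nat) + b)\<^sup>2"
  shows "a = b"
proof -
  have "int (4 * (a * b)) = int ((a + b)\<^sup>2)"
    using assms by (simp only:)
  then have "(int a - int b)\<^sup>2 = 0"
    by (simp add: power2_eq_square algebra_simps)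
  then show ?thesis
    by simp
qed

lemma sum_degrees_eq_sum_card_Int:
  assumes "finite L" "finite B"
  shows "(\<Sum>v\<in>B. card {e\<in>L. v \<in> e}) = (\<Sum>e\<in>L. card (e \<inter> B))"
  using sum.swap_restrict[OF assms(2,1), of "\<lambda>_ _. 1::nat" "\<lambda>v e. v \<in> e"]
  by (simp add: Int_def conj_commute)

lemma card_Int_of_card_2:
  assumes "card e = 2" "e \<inter> B \<noteq> {}"
  shows "card (e \<inter> B) = (if e \<subseteq> B then 2 else 1)"
proof -
  obtain u w where e: "e = {u, w}" "u \<noteq> w"
    using assms(1) by (meson card_2_iff)
  then show ?thesis
    using assms(2) by (cases "u \<in> B"; cases "w \<in> B") (auto simp: Int_insert_left)
qed

lemma sum_card_Int_edges:
  assumes "finite L" "\<And>e. e \<in> L \<Longrightarrow> card e = 2" "\<And>e. e \<in> L \<Longrightarrow> e \<inter> B \<noteq> {}"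
  shows "card L + card {e\<in>L. e \<subseteq> B} = (\<Sum>e\<in>L. card (e \<inter> B))"
proof -
  have "card L + card {e\<in>L. e \<subseteq> B} = (\<Sum>e\<in>L. 1 + of_bool (e \<subseteq> B))"
    using assms(1) by (subst sum.distrib) (simp add: Int_def)
  also have "\<dots> = (\<Sum>e\<in>L. card (e \<inter> B))"
    using assms(2,3) by (intro sum.cong) (simp_all add: card_Int_of_card_2)
  finally show ?thesis .
qed

lemma card_neighbours_eq_degree:
  assumes "\<And>e. e \<in> L \<Longrightarrow> card e = 2"
  shows "card {y. {x, y} \<in> L} = card {e\<in>L. x \<in> e}"
proof -
  have "{e\<in>L. x \<in> e} = (\<lambda>y. {x, y}) ` {y. {x, y} \<in> L}"
  proof safe
    fix e assume "e \<in> L" "x \<in> e"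
    with assms obtain y where "e = {x, y}"
      by (metis card_2_iff insert_commute insert_iff singletonD)
    with \<open>e \<in> L\<close> show "e \<in> (\<lambda>y. {x, y}) ` {y. {x, y} \<in> L}"
      by blast
  qed
  moreover have "inj_on (\<lambda>y. {x, y}) {y. {x, y} \<in> L}"
    using assms by (fastforce simp: inj_on_def doubleton_eq_iff)
  ultimately show ?thesis
    by (simp add: card_image)
qed

text \<open>The maximum-degree proof of Mantel's theorem: the neighbourhood \<open>A\<close> of a vertex of
  maximum degree is independent, so every edge meets \<open>V - A\<close>, and counting edges through the
  vertices of \<open>V - A\<close> counts those inside \<open>V - A\<close> twice.\<close>
lemma triangle_free_edge_count:
  fixes L :: "'a set set"
  assumes "finite V"
    and edges: "\<And>e. e \<in> L \<Longrightarrow> e \<subseteq> V \<and> card e = 2"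
    and triangle_free: "\<And>x y z. {x, y} \<in> L \<Longrightarrow> {y, z} \<in> L \<Longrightarrow> {x, z} \<notin> L"
  obtains A where "A \<subseteq> V" "\<forall>e\<in>L. \<not> e \<subseteq> A"
    "card L + card {e\<in>L. e \<subseteq> V - A} \<le> card A * card (V - A)"
proof (cases "V = {}")
  case True
  with edges have "L = {}"
    by fastforce
  then show ?thesis
    using that[of "{}"] by simp
next
  case False
  define deg where "deg v = card {e\<in>L. v \<in> e}" for v
  obtain x where "x \<in> V" and x_max: "Max (deg ` V) = deg x"
    using obtains_MAX[OF \<open>finite V\<close> False] by blast
  define A where "A = {y. {x, y} \<in> L}"
  define B where "B = V - A"
  have "finite L"
    using edges \<open>finite V\<close> by (meson Pow_iff finite_Pow_iff rev_finite_subset subsetI)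
  have "A \<subseteq> V"
    using edges unfolding A_def by blast
  have independent: "\<not> e \<subseteq> A" if "e \<in> L" for e
  proof
    assume "e \<subseteq> A"
    obtain u w where "e = {u, w}"
      using edges[OF \<open>e \<in> L\<close>] by (meson card_2_iff)
    with \<open>e \<in> L\<close> \<open>e \<subseteq> A\<close> triangle_free[of x u w] show False
      unfolding A_def by auto
  qed
  have "card L + card {e\<in>L. e \<subseteq> B} = (\<Sum>e\<in>L. card (e \<inter> B))"
    using \<open>finite L\<close> edges independent unfolding B_def by (intro sum_card_Int_edges) blast+
  also have "\<dots> = (\<Sum>v\<in>B. deg v)"
    using \<open>finite L\<close> \<open>finite V\<close> unfolding deg_def B_def
    by (simp add: sum_degrees_eq_sum_card_Int)
  also have "\<dots> \<le> (\<Sum>v\<in>B. deg x)"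
    using x_max \<open>finite V\<close> unfolding B_def by (intro sum_mono) (metis DiffD1 Max_ge finite_imageI imageI)
  also have "deg x = card A"
    unfolding deg_def A_def using edges by (simp add: card_neighbours_eq_degree)
  finally show ?thesis
    using that \<open>A \<subseteq> V\<close> independent unfolding B_def by (simp add: mult.commute)
qed

lemma mantel_extremal:
  fixes L :: "'a set set"
  assumes "finite V"
    and edges: "\<And>e. e \<in> L \<Longrightarrow> e \<subseteq> V \<and> card e = 2"
    and triangle_free: "\<And>x y z. {x, y} \<in> L \<Longrightarrow> {y, z} \<in> L \<Longrightarrow> {x, z} \<notin> L"
    and extremal: "4 * card L = (card V)\<^sup>2"
  obtains A where "A \<subseteq> V" "2 * card A = card V" "L = cross_edges A (V - A)"
proof -
  obtain A where "A \<subseteq> V" and independent: "\<forall>e\<in>L. \<not> e \<subseteq> A"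
    and count: "card L + card {e\<in>L. e \<subseteq> V - A} \<le> card A * card (V - A)"
    using triangle_free_edge_count[OF assms(1-3)] .
  have "finite L"
    using edges \<open>finite V\<close> by (meson Pow_iff finite_Pow_iff rev_finite_subset subsetI)
  have card_V: "card V = card A + card (V - A)"
    using \<open>A \<subseteq> V\<close> \<open>finite V\<close> by (simp add: card_Diff_subset card_mono finite_subset)
  then have "4 * (card A * card (V - A)) \<le> (card V)\<^sup>2"
    using four_mult_le_square_add by simp
  with count extremal have "card {e\<in>L. e \<subseteq> V - A} = 0"
    and balanced: "4 * (card A * card (V - A)) = (card V)\<^sup>2"
    and "card L = card A * card (V - A)"
    by linarith+
  then have no_inner: "{e\<in>L. e \<subseteq> V - A} = {}"
    using \<open>finite L\<close> by simp
  have "L \<subseteq> cross_edges A (V - A)"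
  proof
    fix e assume "e \<in> L"
    then obtain u w where "e = {u, w}" "e \<subseteq> V"
      using edges by (meson card_2_iff)
    with \<open>e \<in> L\<close> independent no_inner show "e \<in> cross_edges A (V - A)"
      by (auto simp: doubleton_in_cross_edges_iff)
  qed
  moreover have "card (cross_edges A (V - A)) = card L"
    using \<open>card L = card A * card (V - A)\<close> by (simp add: card_cross_edges)
  moreover have "finite (cross_edges A (V - A))"
    using \<open>finite V\<close> \<open>A \<subseteq> V\<close> by (simp add: finite_cross_edges finite_subset)
  ultimately have "L = cross_edges A (V - A)"
    using card_subset_eq by metis
  moreover have "2 * card A = card V"
    using four_mult_eq_square_addD[OF balanced[unfolded card_V]] card_V by simp
  ultimately show ?thesis
    using that \<open>A \<subseteq> V\<close> by blast
qed

section \<open>The construction\<close>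

lemma card_3_imp_distinct: "card {x, y, z} = 3 \<Longrightarrow> x \<noteq> y \<and> y \<noteq> z \<and> x \<noteq> z"
  by (cases "x = y"; cases "y = z"; cases "x = z") (simp_all add: card_insert_if)

lemma Tstar_choiceE:
  assumes "t \<in> Tstar_choice V P"
  obtains p r where "p \<in> P" "r \<in> V" "r \<notin> \<Union>P" "t = insert r p"
  using assms unfolding Tstar_choice_def by blast

lemma Tstar_choice_subset_triangles_on:
  assumes "\<And>p. p \<in> P \<Longrightarrow> p \<subseteq> V \<and> card p = 2"
  shows "Tstar_choice V P \<subseteq> triangles_on V"
proof
  fix t assume "t \<in> Tstar_choice V P"
  then obtain p r where "p \<in> P" "r \<in> V" "r \<notin> \<Union>P" "t = insert r p"
    by (rule Tstar_choiceE)
  with assms[of p] show "t \<in> triangles_on V"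
    unfolding triangles_on_def by (auto simp: card_insert_if card_ge_0_finite)
qed

lemma Tstar_choice_eq_image: "Tstar_choice V P = (\<lambda>(p, r). insert r p) ` (P \<times> (V - \<Union>P))"
  unfolding Tstar_choice_def by auto

lemma card_Tstar_choice: "card (Tstar_choice V P) = card P * card (V - \<Union>P)"
proof -
  have "inj_on (\<lambda>(p, r). insert r p) (P \<times> (V - \<Union>P))"
  proof (rule inj_onI, clarify)
    fix p r q s assume "p \<in> P" "q \<in> P" "r \<notin> \<Union>P" "s \<notin> \<Union>P" and eq: "insert r p = insert s q"
    then have "p = insert r p \<inter> \<Union>P" "q = insert s q \<inter> \<Union>P" "r \<notin> q" "s \<notin> p"
      by auto
    with eq show "p = q \<and> r = s"
      by (metis insertE insertI1)
  qed
  then show ?thesis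
    by (simp add: Tstar_choice_eq_image card_image card_cartesian_product)
qed

context
  fixes V :: "'a set" and P :: "'a set set"
  assumes pairs: "\<And>p. p \<in> P \<Longrightarrow> card p = 2"
    and disjoint: "pairwise disjnt P"
begin

lemma Tstar_choice_paired_edge:
  assumes "t \<in> Tstar_choice V P" "{u, v} \<subseteq> t" "u \<noteq> v" "u \<in> \<Union>P" "v \<in> \<Union>P"
  shows "{u, v} \<in> P"
proof -
  obtain p r where "p \<in> P" "r \<notin> \<Union>P" "t = insert r p"
    using assms(1) by (rule Tstar_choiceE)
  with assms have "{u, v} \<subseteq> p"
    by auto
  with pairs[OF \<open>p \<in> P\<close>] \<open>u \<noteq> v\<close> have "p = {u, v}"
    by (metis card_2_iff doubleton_eq_iff insert_subset singletonD insertE)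
  with \<open>p \<in> P\<close> show ?thesis
    by simp
qed

lemma Tstar_choice_unpaired_edge:
  assumes "t \<in> Tstar_choice V P" "{r, u} \<subseteq> t" "r \<notin> \<Union>P" "u \<noteq> r" "p \<in> P" "u \<in> p"
  shows "t = insert r p"
proof -
  obtain q s where "q \<in> P" "s \<notin> \<Union>P" "t = insert s q"
    using assms(1) by (rule Tstar_choiceE)
  with assms have "s = r" "u \<in> q"
    by auto
  with disjoint \<open>q \<in> P\<close> assms(5,6) have "q = p"
    by (meson disjnt_iff pairwiseD)
  with \<open>t = insert s q\<close> \<open>s = r\<close> show ?thesis
    by simp
qed

lemma Tstar_choice_unique_unpaired:
  assumes "t \<in> Tstar_choice V P" "{r, s} \<subseteq> t" "r \<notin> \<Union>P" "s \<notin> \<Union>P"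
  shows "r = s"
  using assms by (elim Tstar_choiceE) auto

lemma Tstar_choice_unpaired_vertex:
  assumes "t \<in> Tstar_choice V P" "t' \<in> Tstar_choice V P" "t'' \<in> Tstar_choice V P"
    and "{r, u} \<subseteq> t" "{r, v} \<subseteq> t'" "{u, v} \<subseteq> t''"
    and "r \<notin> \<Union>P" "u \<noteq> r" "v \<noteq> r" "u \<noteq> v"
  shows "t = t'"
proof -
  have "u \<in> \<Union>P" "v \<in> \<Union>P"
    using Tstar_choice_unique_unpaired[OF assms(1,4,7)] Tstar_choice_unique_unpaired[OF assms(2,5,7)]
      assms(8,9) by blast+
  then have "{u, v} \<in> P"
    using Tstar_choice_paired_edge[OF assms(3,6,10)] by blast
  then have "t = insert r {u, v}" "t' = insert r {u, v}"
    using Tstar_choice_unpaired_edge[OF assms(1,4,7,8)] Tstar_choice_unpaired_edge[OF assms(2,5,7,9)]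
    by simp_all
  then show ?thesis
    by simp
qed

lemma Tstar_choice_no_rainbow: "\<not> has_rainbow_triangle V (Tstar_choice V P)"
proof
  let ?T = "Tstar_choice V P" and ?U = "\<Union>P"
  assume "has_rainbow_triangle V ?T"
  then obtain x y z t1 t2 t3 where triangle: "{x, y, z} \<in> triangles_on V"
    and t: "t1 \<in> ?T" "t2 \<in> ?T" "t3 \<in> ?T" "t1 \<noteq> t2" "t2 \<noteq> t3" "t1 \<noteq> t3"
    and sub: "{x, y} \<subseteq> t1" "{y, z} \<subseteq> t2" "{x, z} \<subseteq> t3"
    unfolding has_rainbow_triangle_def by metis
  have "card {x, y, z} = 3"
    using triangle unfolding triangles_on_def by blast
  then have "x \<noteq> y \<and> y \<noteq> z \<and> x \<noteq> z"
    by (rule card_3_imp_distinct)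
  then have "x \<noteq> y" "y \<noteq> z" "x \<noteq> z" "y \<noteq> x" "z \<noteq> y" "z \<noteq> x"
    by auto
  have sub': "{y, x} \<subseteq> t1" "{z, y} \<subseteq> t2" "{z, x} \<subseteq> t3"
    using sub by auto
  consider "x \<in> ?U" "y \<in> ?U" "z \<in> ?U" | "x \<notin> ?U" | "y \<notin> ?U" | "z \<notin> ?U"
    by blast
  then show False
  proof cases
    case 1
    have "{x, y} \<in> P" "{y, z} \<in> P"
      using Tstar_choice_paired_edge[OF t(1) sub(1) \<open>x \<noteq> y\<close> 1(1,2)]
        Tstar_choice_paired_edge[OF t(2) sub(2) \<open>y \<noteq> z\<close> 1(2,3)] .
    moreover have "\<not> disjnt {x, y} {y, z}"
      by simp
    ultimately have "{x, y} = {y, z}"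
      using disjoint by (meson pairwiseD)
    with \<open>x \<noteq> y\<close> \<open>x \<noteq> z\<close> show False
      by (simp add: doubleton_eq_iff)
  next
    case 2
    from Tstar_choice_unpaired_vertex[OF t(1,3,2) sub(1,3,2) 2] \<open>y \<noteq> x\<close> \<open>z \<noteq> x\<close> \<open>y \<noteq> z\<close>
    have "t1 = t3" .
    with \<open>t1 \<noteq> t3\<close> show False ..
  next
    case 3
    from Tstar_choice_unpaired_vertex[OF t(1,2,3) sub'(1) sub(2,3) 3] \<open>x \<noteq> y\<close> \<open>z \<noteq> y\<close> \<open>x \<noteq> z\<close>
    have "t1 = t2" .
    with \<open>t1 \<noteq> t2\<close> show False ..
  next
    case 4
    from Tstar_choice_unpaired_vertex[OF t(2,3,1) sub'(2,3,1) 4] \<open>y \<noteq> z\<close> \<open>x \<noteq> z\<close> \<open>y \<noteq> x\<close>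
    have "t2 = t3" .
    with \<open>t2 \<noteq> t3\<close> show False ..
  qed
qed

end

lemma card_Union_pairs:
  assumes "pairwise disjnt P" "\<And>p. p \<in> P \<Longrightarrow> card p = 2"
  shows "card (\<Union>P) = 2 * card P"
  using card_Union_disjoint[OF assms(1)] assms(2) by (simp add: card_ge_0_finite)

lemma card_Tstar_choice_admissible:
  assumes "finite V" "card V = n" "4 dvd n" "admissible_pairs n V P"
  shows "card (Tstar_choice V P) = n\<^sup>2 div 8"
proof -
  obtain k where "n = 4 * k"
    using \<open>4 dvd n\<close> by blast
  have "card (\<Union>P) = 2 * k" "\<Union>P \<subseteq> V"
    using assms(4) card_Union_pairs[of P] \<open>n = 4 * k\<close> unfolding admissible_pairs_def by auto
  then have "card (V - \<Union>P) = 2 * k"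
    using assms(1,2) \<open>n = 4 * k\<close> by (simp add: card_Diff_subset finite_subset)
  with assms(4) \<open>n = 4 * k\<close> show ?thesis
    unfolding card_Tstar_choice admissible_pairs_def by (simp add: power2_eq_square)
qed

lemma Tstar_choice_properties:
  assumes "finite V" "card V = n" "4 dvd n" "admissible_pairs n V P"
  shows "Tstar_choice V P \<subseteq> triangles_on V" "card (Tstar_choice V P) = n\<^sup>2 div 8"
    "\<not> has_rainbow_triangle V (Tstar_choice V P)"
proof -
  have "\<And>p. p \<in> P \<Longrightarrow> p \<subseteq> V \<and> card p = 2" "pairwise disjnt P"
    using assms(4) unfolding admissible_pairs_def by blast+
  then show "Tstar_choice V P \<subseteq> triangles_on V" "\<not> has_rainbow_triangle V (Tstar_choice V P)"
    by (simp_all add: Tstar_choice_subset_triangles_on Tstar_choice_no_rainbow)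
  show "card (Tstar_choice V P) = n\<^sup>2 div 8"
    using card_Tstar_choice_admissible[OF assms] .
qed

definition canonical_pairs :: "nat \<Rightarrow> nat set set" where
  "canonical_pairs n = (\<lambda>i. {2 * i, 2 * i + 1}) ` {..<n div 4}"

lemma Union_canonical_pairs: "\<Union>(canonical_pairs n) = {..<2 * (n div 4)}"
proof -
  have "x \<in> {2 * (x div 2), 2 * (x div 2) + 1}" for x :: nat
    by auto
  then show ?thesis
    unfolding canonical_pairs_def by (fastforce simp: less_mult_imp_div_less)
qed

lemma admissible_canonical_pairs: "admissible_pairs n {0..<n} (canonical_pairs n)"
proof -
  have "inj_on (\<lambda>i. {2 * i, 2 * i + 1}) {..<n div 4}"
    by (auto simp: inj_on_def doubleton_eq_iff)
  moreover have "pairwise disjnt (canonical_pairs n)"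
    unfolding canonical_pairs_def by (auto simp: pairwise_def disjnt_def; presburger)
  ultimately show ?thesis
    unfolding admissible_pairs_def canonical_pairs_def by (auto simp: card_image)
qed

lemma Tstar_eq_Tstar_choice:
  assumes "4 dvd n"
  shows "Tstar n = Tstar_choice {0..<n} (canonical_pairs n)"
proof -
  have "{0..<n} - \<Union>(canonical_pairs n) = {n div 2..<n}"
    using assms by (auto simp: Union_canonical_pairs)
  then show ?thesis
    unfolding Tstar_def Tstar_choice_def canonical_pairs_def by (auto simp: insert_commute)
qed

lemma Tstar_choice_image:
  assumes "bij_betw f V W" "\<And>p. p \<in> P \<Longrightarrow> p \<subseteq> V"
  shows "Tstar_choice W ((`) f ` P) = (`) f ` Tstar_choice V P"
proof -
  have "\<Union>P \<subseteq> V"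
    using assms(2) by blast
  with assms(1) have "W - \<Union>((`) f ` P) = f ` (V - \<Union>P)"
    unfolding bij_betw_def by (metis Diff_subset image_Union inj_on_image_set_diff)
  moreover have "(\<lambda>(q, r). insert r q) \<circ> map_prod ((`) f) f = (`) f \<circ> (\<lambda>(p, r). insert r p)"
    by auto
  ultimately show ?thesis
    unfolding Tstar_choice_eq_image by (metis image_comp map_prod_surj_on)
qed

lemma ex_enumeration_of_pairs:
  assumes "finite H" "\<And>p. p \<in> H \<Longrightarrow> card p = 2"
  obtains e :: "nat \<Rightarrow> 'a" where "(\<lambda>i. {e (2 * i), e (2 * i + 1)}) ` {..<card H} = H"
proof -
  obtain g where g: "bij_betw g {..<card H} H"
    using ex_bij_betw_nat_finite[OF assms(1)] by (auto simp: atLeast0LessThan)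
  have "\<forall>p\<in>H. \<exists>a b. p = {a, b}"
    using assms(2) by (meson card_2_iff)
  then obtain c1 c2 where c: "\<And>p. p \<in> H \<Longrightarrow> p = {c1 p, c2 p}"
    by metis
  define e where "e j = (if even j then c1 else c2) (g (j div 2))" for j
  have "{e (2 * i), e (2 * i + 1)} = g i" if "i < card H" for i
    using c[of "g i"] g that unfolding e_def bij_betw_def by auto
  then have "(\<lambda>i. {e (2 * i), e (2 * i + 1)}) ` {..<card H} = g ` {..<card H}"
    by (intro image_cong) auto
  with g that show ?thesis
    by (simp add: bij_betw_imp_surj_on)
qed

lemma ex_bij_onto_canonical_pairs:
  assumes "finite V" "card V = n" "admissible_pairs n V H"
  obtains f where "bij_betw f {0..<n} V" "(`) f ` canonical_pairs n = H"
proof -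
  define k where "k = n div 4"
  define R where "R = V - \<Union>H"
  have "finite H" "card H = k" "\<Union>H \<subseteq> V" and pairs: "\<And>p. p \<in> H \<Longrightarrow> card p = 2"
    using assms(3) unfolding admissible_pairs_def k_def by auto
  then have "card (\<Union>H) = 2 * k"
    using assms(3) card_Union_pairs unfolding admissible_pairs_def by metis
  then have "card R = n - 2 * k" "2 * k \<le> n"
    using assms(1,2) \<open>\<Union>H \<subseteq> V\<close> unfolding R_def k_def by (simp_all add: card_Diff_subset finite_subset)
  obtain e where e: "(\<lambda>i. {e (2 * i), e (2 * i + 1)}) ` {..<k} = H"
    using ex_enumeration_of_pairs[OF \<open>finite H\<close> pairs] \<open>card H = k\<close> by metis
  obtain h where h: "bij_betw h {0..<n - 2 * k} R"
    using ex_bij_betw_nat_finite[of R] assms(1) \<open>card R = n - 2 * k\<close> unfolding R_def by auto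
  define f where "f j = (if j < 2 * k then e j else h (j - 2 * k))" for j
  have pairs_image: "(`) f ` canonical_pairs n = H"
    unfolding canonical_pairs_def k_def[symmetric] e[symmetric] image_image
    by (intro image_cong) (auto simp: f_def)
  have "f ` {..<2 * k} = \<Union>H"
    using Union_canonical_pairs[of n] pairs_image unfolding k_def by (metis image_Union)
  moreover have "f ` {2 * k..<n} = R"
  proof -
    have "f ` {2 * k..<n} = f ` (\<lambda>m. m + 2 * k) ` {0..<n - 2 * k}"
      using \<open>2 * k \<le> n\<close> by simp
    also have "\<dots> = h ` {0..<n - 2 * k}"
      unfolding image_image f_def by simp
    finally show ?thesis
      using h by (simp add: bij_betw_imp_surj_on)
  qed
  moreover have "{0..<n} = {..<2 * k} \<union> {2 * k..<n}"
    using \<open>2 * k \<le> n\<close> by auto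
  ultimately have "f ` {0..<n} = \<Union>H \<union> R"
    by (metis image_Un)
  then have "f ` {0..<n} = V"
    using \<open>\<Union>H \<subseteq> V\<close> unfolding R_def by auto
  then have "bij_betw f {0..<n} V"
    using assms(2) by (simp add: bij_betw_def eq_card_imp_inj_on)
  with pairs_image that show ?thesis
    by blast
qed

lemma Tstar_choice_isomorphic_Tstar:
  assumes "finite V" "card V = n" "4 dvd n" "admissible_pairs n V H"
  shows "\<exists>f. bij_betw f {0..<n} V \<and> Tstar_choice V H = (\<lambda>t. f ` t) ` Tstar n"
proof -
  obtain f where f: "bij_betw f {0..<n} V" "(`) f ` canonical_pairs n = H"
    using ex_bij_onto_canonical_pairs[OF assms(1,2,4)] .
  have "Tstar_choice V H = (`) f ` Tstar_choice {0..<n} (canonical_pairs n)"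
    using Tstar_choice_image[OF f(1)] admissible_canonical_pairs[of n] f(2)
    unfolding admissible_pairs_def by metis
  with f(1) \<open>4 dvd n\<close> show ?thesis
    by (auto simp: Tstar_eq_Tstar_choice)
qed

section \<open>Apexes and legs of a rainbow-free family\<close>

locale rainbow_free_family =
  fixes V :: "'a set" and T :: "'a set set"
  assumes members_triangles: "T \<subseteq> triangles_on V"
    and no_rainbow: "\<not> has_rainbow_triangle V T"
begin

lemma memberD:
  assumes "t \<in> T"
  shows "t \<subseteq> V" "card t = 3" "finite t"
proof -
  show "t \<subseteq> V" "card t = 3"
    using assms members_triangles unfolding triangles_on_def by blast+
  then show "finite t"
    by (intro card_ge_0_finite) simp
qed

lemma finite_members: "finite V \<Longrightarrow> finite T"
  using memberD(1) by (meson Pow_iff finite_Pow_iff finite_subset subsetI)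

lemma member_eq:
  assumes "t \<in> T" "{x, y, z} \<subseteq> t" "x \<noteq> y" "y \<noteq> z" "x \<noteq> z"
  shows "t = {x, y, z}"
proof -
  have "card {x, y, z} = card t"
    using assms(3-5) memberD(2)[OF assms(1)] by simp
  from card_subset_eq[OF memberD(3)[OF assms(1)] assms(2) this] show ?thesis
    by (rule sym)
qed

lemma rainbow_members_not_distinct:
  assumes "t1 \<in> T" "t2 \<in> T" "t3 \<in> T" "{x, y} \<subseteq> t1" "{y, z} \<subseteq> t2" "{x, z} \<subseteq> t3"
    and "x \<noteq> y" "y \<noteq> z" "x \<noteq> z"
  shows "t1 = t2 \<or> t2 = t3 \<or> t1 = t3"
proof (rule ccontr)
  assume distinct: "\<not> ?thesis"
  have "{x, y, z} \<subseteq> V"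
    using assms(1,2,4,5) memberD(1) by blast
  moreover have "card {x, y, z} = 3"
    using assms(7-9) by simp
  ultimately have "{x, y, z} \<in> triangles_on V"
    unfolding triangles_on_def by blast
  with assms distinct have "has_rainbow_triangle V T"
    unfolding has_rainbow_triangle_def by blast
  with no_rainbow show False ..
qed

definition private_edge :: "'a set \<Rightarrow> 'a set \<Rightarrow> bool" where
  "private_edge t e \<longleftrightarrow> (\<forall>s\<in>T. e \<subseteq> s \<longrightarrow> s = t)"

lemma private_edge_at_vertex:
  assumes "t \<in> T" "{x, y, z} \<subseteq> t" "x \<noteq> y" "y \<noteq> z" "x \<noteq> z"
  shows "private_edge t {x, y} \<or> private_edge t {y, z}"
proof (rule ccontr)
  assume "\<not> ?thesis"
  then obtain s1 s2 where s: "s1 \<in> T" "s1 \<noteq> t" "{x, y} \<subseteq> s1" "s2 \<in> T" "s2 \<noteq> t" "{y, z} \<subseteq> s2"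
    unfolding private_edge_def by blast
  have "{x, z} \<subseteq> t"
    using assms(2) by blast
  with s assms have "s1 = s2"
    using rainbow_members_not_distinct[of s1 s2 t x y z] by blast
  with s have "{x, y, z} \<subseteq> s1"
    by blast
  then have "s1 = t"
    using member_eq[OF s(1) _ assms(3-5)] member_eq[OF assms(1-5)] by simp
  with s(2) show False ..
qed

lemma ex_apex: "t \<in> T \<Longrightarrow> \<exists>a\<in>t. \<forall>b\<in>t - {a}. private_edge t {a, b}"
proof -
  assume "t \<in> T"
  then obtain x y z where t: "t = {x, y, z}" "x \<noteq> y" "y \<noteq> z" "x \<noteq> z"
    using memberD by (meson card_3_iff)
  have swap: "{y, x} = {x, y}" "{z, y} = {y, z}" "{z, x} = {x, z}"
    by auto
  have "{x, y, z} \<subseteq> t" "{y, x, z} \<subseteq> t" "{x, z, y} \<subseteq> t"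
    using t(1) by auto
  with \<open>t \<in> T\<close> t(2-4) have "private_edge t {x, y} \<or> private_edge t {y, z}"
    "private_edge t {x, y} \<or> private_edge t {x, z}" "private_edge t {x, z} \<or> private_edge t {y, z}"
    using private_edge_at_vertex[of t x y z] private_edge_at_vertex[of t y x z]
      private_edge_at_vertex[of t x z y] by (simp_all add: swap)
  then consider "private_edge t {x, y}" "private_edge t {x, z}"
    | "private_edge t {x, y}" "private_edge t {y, z}"
    | "private_edge t {x, z}" "private_edge t {y, z}"
    by blast
  then show ?thesis
  proof cases
    case 1
    with t(1) show ?thesis
      by (intro bexI[of _ x]) auto
  next
    case 2
    with t(1) show ?thesis
      by (intro bexI[of _ y]) (auto simp: swap)
  next
    case 3
    with t(1) show ?thesis
      by (intro bexI[of _ z]) (auto simp: swap)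
  qed
qed

definition apex :: "'a set \<Rightarrow> 'a" where
  "apex t = (SOME a. a \<in> t \<and> (\<forall>b\<in>t - {a}. private_edge t {a, b}))"

definition base :: "'a set \<Rightarrow> 'a set" where
  "base t = t - {apex t}"

lemma
  assumes "t \<in> T"
  shows apex_in_member: "apex t \<in> t"
    and private_edge_apex: "b \<in> base t \<Longrightarrow> private_edge t {apex t, b}"
proof -
  have "\<exists>a. a \<in> t \<and> (\<forall>b\<in>t - {a}. private_edge t {a, b})"
    using ex_apex[OF assms] by blast
  from someI_ex[OF this] show "apex t \<in> t" "b \<in> base t \<Longrightarrow> private_edge t {apex t, b}"
    unfolding apex_def base_def by blast+
qed

lemma insert_apex_base: "t \<in> T \<Longrightarrow> insert (apex t) (base t) = t"
  unfolding base_def using apex_in_member by blast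

lemma card_base: "t \<in> T \<Longrightarrow> card (base t) = 2"
  unfolding base_def using apex_in_member memberD by simp

definition legs :: "'a set set" where
  "legs = {{apex t, b} | t b. t \<in> T \<and> b \<in> base t}"

lemma legsE:
  assumes "e \<in> legs"
  obtains t b where "t \<in> T" "b \<in> base t" "e = {apex t, b}"
  using assms unfolding legs_def by blast

lemma leg_subset_member:
  assumes "e \<in> legs" "s \<in> T" "e \<subseteq> s"
  shows "private_edge s e" "apex s \<in> e"
proof -
  obtain t b where "t \<in> T" "b \<in> base t" "e = {apex t, b}"
    using assms(1) by (rule legsE)
  moreover from this have "s = t"
    using private_edge_apex assms(2,3) unfolding private_edge_def by blast
  ultimately show "private_edge s e" "apex s \<in> e"
    using private_edge_apex by auto
qed

lemma leg_in_member: "e \<in> legs \<Longrightarrow> \<exists>s\<in>T. e \<subseteq> s"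
  by (elim legsE) (metis apex_in_member base_def DiffD1 empty_subsetI insert_subset)

lemma legs_edges: "e \<in> legs \<Longrightarrow> e \<subseteq> V \<and> card e = 2"
  by (elim legsE) (use apex_in_member memberD in \<open>auto simp: base_def\<close>)

lemma card_legs:
  assumes "finite T"
  shows "card legs = 2 * card T"
proof -
  have "inj_on (\<lambda>(t, b). {apex t, b}) (SIGMA t:T. base t)"
  proof (rule inj_onI, clarify)
    fix t b s c assume "t \<in> T" "b \<in> base t" "s \<in> T" "c \<in> base s" "{apex t, b} = {apex s, c}"
    moreover from this have "s = t"
      using private_edge_apex apex_in_member unfolding private_edge_def base_def
      by (metis DiffD1 empty_subsetI insert_subset)
    ultimately show "t = s \<and> b = c"
      by (auto simp: doubleton_eq_iff base_def)
  qed
  moreover have "legs = (\<lambda>(t, b). {apex t, b}) ` (SIGMA t:T. base t)"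
    unfolding legs_def by auto
  moreover have "finite (base t)" if "t \<in> T" for t
    using card_base[OF that] by (simp add: card_ge_0_finite)
  ultimately show ?thesis
    using assms by (simp add: card_image card_SigmaI card_base)
qed

lemma legs_triangle_free:
  assumes "{x, y} \<in> legs" "{y, z} \<in> legs"
  shows "{x, z} \<notin> legs"
proof
  assume "{x, z} \<in> legs"
  with assms have "x \<noteq> y" "y \<noteq> z" "x \<noteq> z"
    using legs_edges by fastforce+
  obtain t1 t2 t3 where "t1 \<in> T" "{x, y} \<subseteq> t1" "t2 \<in> T" "{y, z} \<subseteq> t2" "t3 \<in> T" "{x, z} \<subseteq> t3"
    using leg_in_member assms \<open>{x, z} \<in> legs\<close> by meson
  moreover from this have "t1 = t2 \<or> t2 = t3 \<or> t1 = t3"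
    using rainbow_members_not_distinct \<open>x \<noteq> y\<close> \<open>y \<noteq> z\<close> \<open>x \<noteq> z\<close> by meson
  ultimately obtain s where "s \<in> T" "{x, y, z} \<subseteq> s"
    by auto
  then have "apex s \<in> {x, y}" "apex s \<in> {y, z}" "apex s \<in> {x, z}"
    using leg_subset_member(2) assms \<open>{x, z} \<in> legs\<close> by auto
  with \<open>x \<noteq> y\<close> \<open>y \<noteq> z\<close> \<open>x \<noteq> z\<close> show False
    by auto
qed

lemma extremal_legs:
  assumes "finite V" "8 * card T = (card V)\<^sup>2"
  obtains X where "X \<subseteq> V" "2 * card X = card V" "legs = cross_edges X (V - X)"
proof -
  have "4 * card legs = (card V)\<^sup>2"
    using assms by (simp add: card_legs finite_members)
  with assms(1) legs_edges legs_triangle_free obtain X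
    where "X \<subseteq> V" "2 * card X = card V" "legs = cross_edges X (V - X)"
    by (rule mantel_extremal)
  then show ?thesis
    by (rule that)
qed

end

section \<open>Extremal rainbow-free families\<close>

locale bipartite_legs = rainbow_free_family +
  fixes X :: "'a set"
  assumes X_subset: "X \<subseteq> V"
    and legs_cross: "legs = cross_edges X (V - X)"
begin

lemma leg_iff: "{u, v} \<in> legs \<longleftrightarrow> u \<in> X \<and> v \<in> V - X \<or> u \<in> V - X \<and> v \<in> X"
  unfolding legs_cross by (rule doubleton_in_cross_edges_iff)

lemma base_opposite_apex:
  assumes "t \<in> T" "b \<in> base t"
  shows "b \<in> V" "b \<in> X \<longleftrightarrow> apex t \<notin> X"
proof -
  have "{apex t, b} \<in> legs"
    unfolding legs_def using assms by blast
  then show "b \<in> V" "b \<in> X \<longleftrightarrow> apex t \<notin> X"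
    using X_subset unfolding leg_iff by auto
qed

lemma move_apex:
  assumes "t \<in> T" "q \<in> V" "q \<in> X \<longleftrightarrow> apex t \<in> X"
  shows "insert q (base t) \<in> T"
proof (cases "q = apex t")
  case True
  with insert_apex_base assms(1) show ?thesis
    by simp
next
  case False
  obtain b1 b2 where base: "base t = {b1, b2}" "b1 \<noteq> b2"
    using card_base[OF assms(1)] by (meson card_2_iff)
  then have "b1 \<in> V" "b2 \<in> V" "b1 \<in> X \<longleftrightarrow> apex t \<notin> X" "b2 \<in> X \<longleftrightarrow> apex t \<notin> X"
    using base_opposite_apex[OF assms(1)] by auto
  with assms(3) have "q \<noteq> b1" "q \<noteq> b2" "{q, b1} \<in> legs" "{q, b2} \<in> legs"
    using assms(2) unfolding leg_iff by auto
  then obtain t1 t3 where t1: "t1 \<in> T" "{q, b1} \<subseteq> t1" and t3: "t3 \<in> T" "{q, b2} \<subseteq> t3"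
    using leg_in_member by meson
  have "q \<notin> t"
    using \<open>q \<noteq> b1\<close> \<open>q \<noteq> b2\<close> False insert_apex_base[OF assms(1)] base(1) by auto
  moreover have "{b1, b2} \<subseteq> t"
    using insert_apex_base[OF assms(1)] base(1) by auto
  ultimately have "t1 = t3"
    using rainbow_members_not_distinct[OF t1(1) assms(1) t3(1) t1(2) _ t3(2)]
      \<open>q \<noteq> b1\<close> \<open>q \<noteq> b2\<close> \<open>b1 \<noteq> b2\<close> t1(2) t3(2) by blast
  then have "t1 = {q, b1, b2}"
    using member_eq[OF t1(1)] t1(2) t3(2) \<open>q \<noteq> b1\<close> \<open>q \<noteq> b2\<close> \<open>b1 \<noteq> b2\<close> by simp
  with t1(1) base(1) show ?thesis
    by simp
qed

text \<open>Moving the apex of \<open>t\<close> onto a base vertex of \<open>s\<close> and vice versa produces two triangles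
  sharing the leg between these vertices; they would have to coincide, which is impossible if the
  apexes of \<open>s\<close> and \<open>t\<close> lie in different parts.\<close>
lemma apex_same_part:
  assumes "t \<in> T" "apex t \<in> X" "s \<in> T"
  shows "apex s \<in> X"
proof (rule ccontr)
  assume "apex s \<notin> X"
  obtain c c' where "base t = {c, c'}" "c \<noteq> c'"
    using card_base[OF assms(1)] by (meson card_2_iff)
  obtain d d' where "base s = {d, d'}"
    using card_base[OF assms(3)] by (meson card_2_iff)
  then have "d \<in> base s"
    by simp
  have c: "c \<in> V - X" "c' \<in> V - X"
    using base_opposite_apex[OF assms(1)] assms(2) \<open>base t = {c, c'}\<close> by auto
  have d: "d \<in> X"
    using base_opposite_apex[OF assms(3) \<open>d \<in> base s\<close>] \<open>apex s \<notin> X\<close> by simp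
  have moved_t: "insert d (base t) \<in> T"
    by (rule move_apex[OF assms(1)]) (use d X_subset assms(2) in auto)
  have moved_s: "insert c (base s) \<in> T"
    by (rule move_apex[OF assms(3)]) (use c \<open>apex s \<notin> X\<close> in auto)
  have "{d, c} \<in> legs"
    using c d unfolding leg_iff by simp
  then have "private_edge (insert d (base t)) {d, c}"
    using leg_subset_member(1)[OF _ moved_t] \<open>base t = {c, c'}\<close> by simp
  moreover have "{d, c} \<subseteq> insert c (base s)"
    using \<open>d \<in> base s\<close> by simp
  ultimately have "insert c (base s) = insert d (base t)"
    using moved_s unfolding private_edge_def by blast
  moreover have "c' \<in> insert d (base t)"
    using \<open>base t = {c, c'}\<close> by simp
  ultimately have "c' \<in> insert c (base s)"
    by simp
  then have "c' \<in> base s"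
    using \<open>c \<noteq> c'\<close> by simp
  then have "c' \<in> X"
    using base_opposite_apex(2)[OF assms(3)] \<open>apex s \<notin> X\<close> by simp
  with c show False
    by simp
qed

end

locale bipartite_legs_apex_part = bipartite_legs +
  assumes apex_in_X: "t \<in> T \<Longrightarrow> apex t \<in> X"
begin

lemma base_subset: "t \<in> T \<Longrightarrow> base t \<subseteq> V - X"
  using base_opposite_apex apex_in_X by blast

lemma insert_base_in_T: "t \<in> T \<Longrightarrow> r \<in> X \<Longrightarrow> insert r (base t) \<in> T"
  using move_apex apex_in_X X_subset by blast

lemma bases_disjoint: "pairwise disjnt (base ` T)"
proof (rule pairwiseI)
  fix p q assume "p \<in> base ` T" "q \<in> base ` T" "p \<noteq> q"
  then obtain s t where "s \<in> T" "t \<in> T" "p = base s" "q = base t"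
    by blast
  show "disjnt p q"
  proof (rule ccontr)
    assume "\<not> disjnt p q"
    then obtain b where "b \<in> base s" "b \<in> base t"
      using \<open>p = base s\<close> \<open>q = base t\<close> by (auto simp: disjnt_def)
    let ?r = "apex s"
    have "{?r, b} \<in> legs"
      using apex_in_X[OF \<open>s \<in> T\<close>] base_subset[OF \<open>s \<in> T\<close>] \<open>b \<in> base s\<close> unfolding leg_iff by blast
    moreover have "{?r, b} \<subseteq> s" "{?r, b} \<subseteq> insert ?r (base t)"
      using insert_apex_base[OF \<open>s \<in> T\<close>] \<open>b \<in> base s\<close> \<open>b \<in> base t\<close> by auto
    moreover have "insert ?r (base t) \<in> T"
      using insert_base_in_T[OF \<open>t \<in> T\<close> apex_in_X[OF \<open>s \<in> T\<close>]] .
    ultimately have "insert ?r (base t) = s"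
      using leg_subset_member(1)[OF _ \<open>s \<in> T\<close>] unfolding private_edge_def by blast
    moreover have "?r \<notin> base t"
      using base_subset[OF \<open>t \<in> T\<close>] apex_in_X[OF \<open>s \<in> T\<close>] by blast
    ultimately have "base t = base s"
      unfolding base_def by auto
    with \<open>p \<noteq> q\<close> \<open>p = base s\<close> \<open>q = base t\<close> show False
      by simp
  qed
qed

lemma Union_bases:
  assumes "X \<noteq> {}"
  shows "\<Union>(base ` T) = V - X"
proof
  show "\<Union>(base ` T) \<subseteq> V - X"
    using base_subset by blast
next
  show "V - X \<subseteq> \<Union>(base ` T)"
  proof
    fix b assume "b \<in> V - X"
    obtain r where "r \<in> X"
      using assms by blast
    with \<open>b \<in> V - X\<close> have "{r, b} \<in> legs"
      unfolding leg_iff by blast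
    then obtain s where "s \<in> T" "{r, b} \<subseteq> s"
      using leg_in_member by blast
    then have "apex s = r"
      using leg_subset_member(2)[OF \<open>{r, b} \<in> legs\<close>] apex_in_X \<open>b \<in> V - X\<close> by auto
    with \<open>{r, b} \<subseteq> s\<close> \<open>r \<in> X\<close> \<open>b \<in> V - X\<close> have "b \<in> base s"
      unfolding base_def by auto
    with \<open>s \<in> T\<close> show "b \<in> \<Union>(base ` T)"
      by blast
  qed
qed

lemma eq_Tstar_choice_bases:
  assumes "X \<noteq> {}"
  shows "T = Tstar_choice V (base ` T)"
proof -
  have outside: "V - \<Union>(base ` T) = X"
    using Union_bases[OF assms] X_subset by blast
  show ?thesis
  proof
    show "T \<subseteq> Tstar_choice V (base ` T)"
      unfolding Tstar_choice_def outside using insert_apex_base apex_in_X by blast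
    show "Tstar_choice V (base ` T) \<subseteq> T"
      unfolding Tstar_choice_def outside using insert_base_in_T by blast
  qed
qed

lemma admissible_bases:
  assumes "finite V" "2 * card X = card V"
  shows "admissible_pairs (card V) V (base ` T)"
proof -
  have "2 * card (base ` T) = card (V - X)"
  proof (cases "X = {}")
    case True
    with assms have "V = {}"
      by simp
    then have "T = {}"
      using memberD(1,2) by fastforce
    with \<open>V = {}\<close> show ?thesis
      by simp
  next
    case False
    have "card (\<Union>(base ` T)) = 2 * card (base ` T)"
      by (rule card_Union_pairs[OF bases_disjoint]) (use card_base in auto)
    with Union_bases[OF False] show ?thesis
      by simp
  qed
  also have "\<dots> = card X"
    using assms X_subset by (simp add: card_Diff_subset finite_subset)
  finally have "card (base ` T) = card V div 4"
    using assms(2) by presburger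
  moreover have "\<forall>p\<in>base ` T. p \<subseteq> V \<and> card p = 2"
    using base_subset card_base by blast
  ultimately show ?thesis
    unfolding admissible_pairs_def using finite_members[OF assms(1)] bases_disjoint by simp
qed

end

lemma (in rainbow_free_family) extremal_eq_Tstar_choice:
  assumes "finite V" "card V = n" "0 < n" "4 dvd n" "card T = n\<^sup>2 div 8"
  obtains H where "admissible_pairs n V H" "T = Tstar_choice V H"
proof -
  obtain k where "n = 4 * k" "0 < k"
    using assms(3,4) by auto
  then have "n\<^sup>2 = 8 * (2 * k\<^sup>2)"
    by (simp add: power2_eq_square)
  with assms(2,5) \<open>0 < k\<close> have "8 * card T = (card V)\<^sup>2" "card T \<noteq> 0"
    by simp_all
  then obtain t0 where "t0 \<in> T"
    by (metis card.empty ex_in_conv)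
  obtain A where A: "A \<subseteq> V" "2 * card A = card V" "legs = cross_edges A (V - A)"
    by (rule extremal_legs[OF assms(1) \<open>8 * card T = (card V)\<^sup>2\<close>])
  define X where "X = (if apex t0 \<in> A then A else V - A)"
  have X: "X \<subseteq> V" "2 * card X = card V" "legs = cross_edges X (V - X)" "apex t0 \<in> X"
  proof -
    have "apex t0 \<in> V"
      using apex_in_member memberD(1) \<open>t0 \<in> T\<close> by blast
    moreover have "2 * card (V - A) = card V" "V - (V - A) = A"
      using A assms(1) by (auto simp: card_Diff_subset finite_subset)
    ultimately show "X \<subseteq> V" "2 * card X = card V" "legs = cross_edges X (V - X)" "apex t0 \<in> X"
      using A unfolding X_def by (auto simp: cross_edges_commute)
  qed
  interpret bipartite_legs V T X
    by unfold_locales (use X(1,3) in auto)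
  interpret bipartite_legs_apex_part V T X
    by unfold_locales (rule apex_same_part[OF \<open>t0 \<in> T\<close> X(4)])
  have "X \<noteq> {}"
    using X(4) by blast
  have "admissible_pairs n V (base ` T)"
    using admissible_bases[OF assms(1) X(2)] assms(2) by simp
  moreover have "T = Tstar_choice V (base ` T)"
    using eq_Tstar_choice_bases[OF \<open>X \<noteq> {}\<close>] .
  ultimately show ?thesis
    by (rule that)
qed

theorem theorem2p2:
  fixes n :: nat
  assumes "n > 0" and "4 dvd n"
  shows "(\<forall>(V :: 'a set) P. finite V \<and> card V = n \<and> admissible_pairs n V P \<longrightarrow>
            Tstar_choice V P \<subseteq> triangles_on V \<and>
            card (Tstar_choice V P) = n^2 div 8 \<and>
            \<not> has_rainbow_triangle V (Tstar_choice V P))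
       \<and> Tstar n \<subseteq> triangles_on {0..<n} \<and> card (Tstar n) = n^2 div 8
       \<and> \<not> has_rainbow_triangle {0..<n} (Tstar n)
       \<and> (\<forall>(V :: 'b set) T. finite V \<and> card V = n \<and> T \<subseteq> triangles_on V \<and>
            card T = n^2 div 8 \<and> \<not> has_rainbow_triangle V T \<longrightarrow>
            (\<exists>f. bij_betw f {0..<n} V \<and> T = (\<lambda>t. f ` t) ` Tstar n))"
proof (intro conjI allI impI; (elim conjE)?)
  show "Tstar_choice V P \<subseteq> triangles_on V" "card (Tstar_choice V P) = n^2 div 8"
    "\<not> has_rainbow_triangle V (Tstar_choice V P)"
    if "finite V" "card V = n" "admissible_pairs n V P" for V :: "'a set" and P
    using Tstar_choice_properties[OF that(1,2) assms(2) that(3)] by simp_all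
  show "Tstar n \<subseteq> triangles_on {0..<n}" "card (Tstar n) = n^2 div 8"
    "\<not> has_rainbow_triangle {0..<n} (Tstar n)"
    using Tstar_choice_properties[OF _ _ assms(2) admissible_canonical_pairs]
    unfolding Tstar_eq_Tstar_choice[OF assms(2)] by simp_all
  show "\<exists>f. bij_betw f {0..<n} V \<and> T = (\<lambda>t. f ` t) ` Tstar n"
    if V: "finite V" "card V = n" and T: "T \<subseteq> triangles_on V" "card T = n^2 div 8"
      "\<not> has_rainbow_triangle V T" for V :: "'b set" and T
  proof -
    interpret rainbow_free_family V T
      using T(1,3) by unfold_locales
    obtain H where "admissible_pairs n V H" "T = Tstar_choice V H"
      using extremal_eq_Tstar_choice[OF V assms T(2)] .
    with Tstar_choice_isomorphic_Tstar[OF V assms(2)] show ?thesis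
      by simp
  qed
qed

end
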